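(* Consider the discrete-time system with sensor and actuator attacks described in the context. Let $q_1,q_2$ be the largest integers such that for every $J_u\subset\{1,\dots,n_u\}$ with $\card(J_u)\le 2q_1<n_u$ and every $J_s\subset\{1,\dots,n_y\}$ with $\card(J_s)\ge n_y-2q_2>0$ a partial UIO for the pair $(J_u,J_s)$ exists, and suppose $\card(W_u)\le q_1<\frac{n_u}{2}$ and $\card(W_y)\le q_2<\frac{n_y}{2}$. Run a partial UIO $\hat x_{J_{us}}$ for each pair $(J_u,J_s)$ with $\card(J_u)=q_1$, $\card(J_s)=n_y-q_2$, and a partial UIO $\hat x_{S_{us}}$ for each pair $(S_u,S_s)$ with $\card(S_u)=2q_1$, $\card(S_s)=n_y-2q_2$. For $k\ge0$ and each such $(J_u,J_s)$ define $$\pi_{J_{us}}(k)=\max_{S_u\supset J_u,\ \card(S_u)=2q_1;\ S_s\subset J_s,\ \card(S_s)=n_y-2q_2}|\hat x_{J_{us}}(k)-\hat x_{S_{us}}(k)|,$$ let $(\sigma_u(k),\sigma_s(k))$ be a minimizer of $\pi_{J_{us}}(k)$ over all pairs $(J_u,J_s)$ with $\card(J_u)=q_1$, $\card(J_s)=n_y-q_2$, and set $\hat x(k)=\hat x_{\sigma_{us}(k)}(k)$, the estimate of the partial UIO indexed by $(\sigma_u(k),\sigma_s(k))$. Define $e(k)=\hat x_{\sigma_{us}(k)}(k)-x(k)$. Then there exists a class-$\mathcal{KL}$ function $\bar\beta$ such that $$|e(k)|\le\bar\beta(e_0,k)\quad\text{for all }k\ge0,\qquad e_0:=\max_{(J_u,J_s),(S_u,S_s)}\{|e_{J_{us}}(0)|,|e_{S_{us}}(0)|\},$$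 the maximum being over all pairs of the two kinds above, with $e_{J_{us}}=\hat x_{J_{us}}-x$, $e_{S_{us}}=\hat x_{S_{us}}-x$.
   Context: System: $x(k+1)=f(x(k))+B(u(k)+a_u(k))$, $y(k)=h(x(k))+a_y(k)$, $k\in\mathbb{N}$, with state $x\in\mathbb{R}^n$, known input $u\in\mathbb{R}^{n_u}$, actuator attack $a_u=(a_{u1},\dots,a_{un_u})^\top$, output $y\in\mathbb{R}^{n_y}$, sensor attack $a_y=(a_{y1},\dots,a_{yn_y})^\top$ (attacks may be arbitrarily large), $f:\mathbb{R}^n\to\mathbb{R}^n$, $h:\mathbb{R}^n\to\mathbb{R}^{n_y}$, $B=[b_1,\dots,b_{n_u}]\in\mathbb{R}^{n\times n_u}$ of full column rank. Attacked sets: $W_u=\{i:a_{ui}(k)\ne0\text{ for some }k\ge0\}$, $W_y=\{i:a_{yi}(k)\ne0\text{ for some }k\ge0\}$ (unknown, time-invariant), so $\supp(a_u(k))\subseteq W_u$, $\supp(a_y(k))\subseteq W_y$ for all $k$. For index sets $J$, $y^J,a_y^J,a_u^J$ denote subvectors indexed by $J$ and $b_J$ the matrix with columns $b_i$, $i\in J$. A partial UIO for the pair $(J_u,J_s)$ (an unknown input observer for $x(k+1)=f(x)+Bu+b_{J_u}a_u^{J_u}$, $y^{J_s}=h^{J_s}(x)+a_y^{J_s}$ with unknown input $a_u^{J_u}$) is a system $\hat x_{J_{us}}(k+1)=f_{J_{us}}(\hat x_{J_{us}}(k),u(k),y^{J_s}(k),y^{J_s}(k+1))$, $f_{J_{us}}:\mathbb{R}^n\times\mathbb{R}^{n_u}\times\mathbb{R}^{\card(J_s)}\times\mathbb{R}^{\card(J_s)}\to\mathbb{R}^n$,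 such that, with $e_{J_{us}}=\hat x_{J_{us}}-x$, there is a class-$\mathcal{KL}$ function $\beta_{J_{us}}$ with $|e_{J_{us}}(k)|\le\beta_{J_{us}}(|e_{J_{us}}(0)|,k)$ for all $k\ge0$, for all initial conditions $x(0),\hat x_{J_{us}}(0)$ and known inputs, whenever $W_u\subseteq J_u$ and $a_y^{J_s}(k)=0$ for all $k\ge0$. $|\cdot|$ is the Euclidean norm. *)

theory Defs
  imports "HOL-Analysis.Analysis"
begin

(* Vectors in R^{n_u}, R^{n_y} (and attacks) are modelled as nat => real, with only the
   components 0..n_u-1 (resp. 0..n_y-1) being meaningful.  Index i corresponds to the
   paper's index i+1.  The state space R^n is an arbitrary euclidean_space 'x. *)

definition class_K :: "(real \<Rightarrow> real) \<Rightarrow> bool" where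
  "class_K \<alpha> \<longleftrightarrow> continuous_on {0..} \<alpha> \<and> \<alpha> 0 = 0 \<and> strict_mono_on {0..} \<alpha>"

definition class_KL :: "(real \<Rightarrow> nat \<Rightarrow> real) \<Rightarrow> bool" where
  "class_KL \<beta> \<longleftrightarrow>
     (\<forall>t. class_K (\<lambda>r. \<beta> r t)) \<and>
     (\<forall>r\<ge>0. (\<forall>s t. s \<le> t \<longrightarrow> \<beta> r t \<le> \<beta> r s) \<and> (\<beta> r \<longlonglongrightarrow> 0))"

definition restr :: "nat set \<Rightarrow> (nat \<Rightarrow> real) \<Rightarrow> (nat \<Rightarrow> real)" where
  "restr J v = (\<lambda>i. if i \<in> J then v i else 0)"

definition Bmul :: "(nat \<Rightarrow> 'x::real_vector) \<Rightarrow> nat \<Rightarrow> (nat \<Rightarrow> real) \<Rightarrow> 'x" where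
  "Bmul b nu v = (\<Sum>i<nu. v i *\<^sub>R b i)"

definition full_col_rank :: "(nat \<Rightarrow> 'x::real_vector) \<Rightarrow> nat \<Rightarrow> bool" where
  "full_col_rank b nu \<longleftrightarrow> (\<forall>c. Bmul b nu c = 0 \<longrightarrow> (\<forall>i<nu. c i = 0))"

definition sys_output :: "('x \<Rightarrow> nat \<Rightarrow> real) \<Rightarrow> (nat \<Rightarrow> 'x) \<Rightarrow> (nat \<Rightarrow> nat \<Rightarrow> real) \<Rightarrow> nat \<Rightarrow> nat \<Rightarrow> real" where
  "sys_output h x ay k = (\<lambda>i. h (x k) i + ay k i)"

definition system_traj :: "('x::real_vector \<Rightarrow> 'x) \<Rightarrow> (nat \<Rightarrow> 'x) \<Rightarrow> nat \<Rightarrow> (nat \<Rightarrow> 'x)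
    \<Rightarrow> (nat \<Rightarrow> nat \<Rightarrow> real) \<Rightarrow> (nat \<Rightarrow> nat \<Rightarrow> real) \<Rightarrow> bool" where
  "system_traj f b nu x u au \<longleftrightarrow> (\<forall>k. x (Suc k) = f (x k) + Bmul b nu (\<lambda>i. u k i + au k i))"

(* observer update map: (xhat(k), u(k), y^{Js}(k), y^{Js}(k+1)) |-> xhat(k+1) *)
type_synonym 'x obs_map = "'x \<Rightarrow> (nat \<Rightarrow> real) \<Rightarrow> (nat \<Rightarrow> real) \<Rightarrow> (nat \<Rightarrow> real) \<Rightarrow> 'x"

primrec run_obs :: "'x obs_map \<Rightarrow> 'x \<Rightarrow> (nat \<Rightarrow> nat \<Rightarrow> real) \<Rightarrow> (nat \<Rightarrow> nat \<Rightarrow> real)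
    \<Rightarrow> nat set \<Rightarrow> nat \<Rightarrow> 'x" where
  "run_obs F x0 u y Js 0 = x0"
| "run_obs F x0 u y Js (Suc k) =
     F (run_obs F x0 u y Js k) (u k) (restr Js (y k)) (restr Js (y (Suc k)))"

definition Wset :: "nat \<Rightarrow> (nat \<Rightarrow> nat \<Rightarrow> real) \<Rightarrow> nat set" where
  "Wset m a = {i. i < m \<and> (\<exists>k. a k i \<noteq> 0)}"

definition partial_UIO :: "('x::euclidean_space \<Rightarrow> 'x) \<Rightarrow> ('x \<Rightarrow> nat \<Rightarrow> real) \<Rightarrow> (nat \<Rightarrow> 'x)
    \<Rightarrow> nat \<Rightarrow> nat set \<Rightarrow> nat set \<Rightarrow> 'x obs_map \<Rightarrow> bool" where
  "partial_UIO f h b nu Ju Js F \<longleftrightarrow>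
     (\<exists>\<beta>. class_KL \<beta> \<and>
       (\<forall>x u au ay x0. system_traj f b nu x u au \<longrightarrow> Wset nu au \<subseteq> Ju \<longrightarrow>
          (\<forall>k. \<forall>i\<in>Js. ay k i = 0) \<longrightarrow>
          (\<forall>k. norm (run_obs F x0 u (sys_output h x ay) Js k - x k) \<le> \<beta> (norm (x0 - x 0)) k)))"

definition Jpairs :: "nat \<Rightarrow> nat \<Rightarrow> nat \<Rightarrow> nat \<Rightarrow> (nat set \<times> nat set) set" where
  "Jpairs nu ny q1 q2 = {(Ju, Js). Ju \<subseteq> {..<nu} \<and> card Ju = q1 \<and> Js \<subseteq> {..<ny} \<and> card Js = ny - q2}"

definition Spairs :: "nat \<Rightarrow> nat \<Rightarrow> nat \<Rightarrow> nat \<Rightarrow> (nat set \<times> nat set) set" where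
  "Spairs nu ny q1 q2 = {(Su, Ss). Su \<subseteq> {..<nu} \<and> card Su = 2 * q1 \<and> Ss \<subseteq> {..<ny} \<and> card Ss = ny - 2 * q2}"

definition pi_J :: "(nat set \<Rightarrow> nat set \<Rightarrow> nat \<Rightarrow> 'x::real_normed_vector)
    \<Rightarrow> (nat set \<Rightarrow> nat set \<Rightarrow> nat \<Rightarrow> 'x) \<Rightarrow> nat \<Rightarrow> nat \<Rightarrow> nat \<Rightarrow> nat \<Rightarrow> nat set \<Rightarrow> nat set \<Rightarrow> nat \<Rightarrow> real" where
  "pi_J xJ xS nu ny q1 q2 Ju Js k =
     Max {norm (xJ Ju Js k - xS Su Ss k) | Su Ss.
            (Su, Ss) \<in> Spairs nu ny q1 q2 \<and> Ju \<subseteq> Su \<and> Ss \<subseteq> Js}"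

end

theory Submission
  imports Defs
begin

(* Call an index pair correct if its actuator set contains every attacked actuator and its sensor
   set avoids every attacked sensor, and say (S_u, S_s) lies below (J_u, J_s) if J_u <= S_u and
   S_s <= J_s.  The estimate of a correct pair has error at most M, the sum of all the KL gains
   evaluated at e0.  As card W_u <= q1 and card W_y <= q2, some pair (J_a, J_b) is correct; every
   pair below it is correct, so pi(J_a, J_b) <= 2 M.  For the selected pair (J_u, J_s), enlarging
   (J_u Un J_a, J_s Int J_b) gives a pair below both (J_u, J_s) and (J_a, J_b), hence correct, so
   the selected error is at most pi(J_u, J_s) + M <= pi(J_a, J_b) + M <= 3 M. *)

lemma class_K_mono:
  assumes "class_K \<alpha>" "0 \<le> r" "r \<le> s"
  shows "\<alpha> r \<le> \<alpha> s"
  using assms strict_mono_on_leD[of "{0..}" \<alpha> r s] unfolding class_K_def by simp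

lemma class_K_add:
  assumes \<alpha>: "class_K \<alpha>" and \<gamma>: "class_K \<gamma>"
  shows "class_K (\<lambda>r. \<alpha> r + \<gamma> r)"
  unfolding class_K_def
proof (intro conjI strict_mono_onI)
  show "continuous_on {0..} (\<lambda>r. \<alpha> r + \<gamma> r)"
    using assms unfolding class_K_def by (intro continuous_on_add) simp_all
  show "\<alpha> 0 + \<gamma> 0 = 0"
    using assms unfolding class_K_def by simp
  fix r s :: real
  assume "r \<in> {0..}" "s \<in> {0..}" "r < s"
  then have "\<alpha> r < \<alpha> s" "\<gamma> r < \<gamma> s"
    using \<alpha> \<gamma> strict_mono_onD[of "{0..}" \<alpha> r s] strict_mono_onD[of "{0..}" \<gamma> r s]
    unfolding class_K_def by simp_all
  then show "\<alpha> r + \<gamma> r < \<alpha> s + \<gamma> s"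
    by simp
qed

lemma class_K_cmult:
  assumes c: "0 < c" and \<alpha>: "class_K \<alpha>"
  shows "class_K (\<lambda>r. c * \<alpha> r)"
  unfolding class_K_def
proof (intro conjI strict_mono_onI)
  show "continuous_on {0..} (\<lambda>r. c * \<alpha> r)"
    using \<alpha> unfolding class_K_def by (intro continuous_on_mult_left) simp
  show "c * \<alpha> 0 = 0"
    using \<alpha> unfolding class_K_def by simp
  fix r s :: real
  assume "r \<in> {0..}" "s \<in> {0..}" "r < s"
  then have "\<alpha> r < \<alpha> s"
    using \<alpha> strict_mono_onD[of "{0..}" \<alpha> r s] unfolding class_K_def by simp
  then show "c * \<alpha> r < c * \<alpha> s"
    using c by simp
qed

lemma class_KL_mono:
  assumes "class_KL \<beta>" "0 \<le> r" "r \<le> s"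
  shows "\<beta> r k \<le> \<beta> s k"
  using assms class_K_mono unfolding class_KL_def by blast

lemma class_KL_nonneg:
  assumes "class_KL \<beta>" "0 \<le> r"
  shows "0 \<le> \<beta> r k"
  using class_KL_mono[OF assms(1) order_refl assms(2)] assms(1)
  unfolding class_KL_def class_K_def by simp

lemma class_KL_add:
  assumes "class_KL \<beta>" "class_KL \<gamma>"
  shows "class_KL (\<lambda>r k. \<beta> r k + \<gamma> r k)"
  unfolding class_KL_def
proof (intro conjI allI impI)
  show "class_K (\<lambda>r. \<beta> r k + \<gamma> r k)" for k
    using assms unfolding class_KL_def by (intro class_K_add) simp_all
  fix r :: real
  assume "0 \<le> r"
  then show "\<beta> r t + \<gamma> r t \<le> \<beta> r s + \<gamma> r s" if "s \<le> t" for s t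
    using assms that unfolding class_KL_def by (intro add_mono) simp_all
  show "(\<lambda>k. \<beta> r k + \<gamma> r k) \<longlonglongrightarrow> 0"
    using assms \<open>0 \<le> r\<close> unfolding class_KL_def by (intro tendsto_add_zero) simp_all
qed

lemma class_KL_cmult:
  assumes "0 < c" "class_KL \<beta>"
  shows "class_KL (\<lambda>r k. c * \<beta> r k)"
  unfolding class_KL_def
proof (intro conjI allI impI)
  show "class_K (\<lambda>r. c * \<beta> r k)" for k
    using assms unfolding class_KL_def by (intro class_K_cmult) simp_all
  fix r :: real
  assume "0 \<le> r"
  then show "c * \<beta> r t \<le> c * \<beta> r s" if "s \<le> t" for s t
    using assms that unfolding class_KL_def by simp
  show "(\<lambda>k. c * \<beta> r k) \<longlonglongrightarrow> 0"
    using assms \<open>0 \<le> r\<close> unfolding class_KL_def by (intro tendsto_mult_right_zero) simp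
qed

lemma class_KL_sum:
  assumes "finite A" "A \<noteq> {}" "\<And>p. p \<in> A \<Longrightarrow> class_KL (\<beta> p)"
  shows "class_KL (\<lambda>r k. \<Sum>p\<in>A. \<beta> p r k)"
  using assms
proof (induction A rule: finite_ne_induct)
  case (singleton p)
  then show ?case by simp
next
  case (insert p A)
  then show ?case by (simp add: class_KL_add)
qed

definition partial_UIO_gain :: "('x::euclidean_space \<Rightarrow> 'x) \<Rightarrow> ('x \<Rightarrow> nat \<Rightarrow> real) \<Rightarrow> (nat \<Rightarrow> 'x)
    \<Rightarrow> nat \<Rightarrow> nat set \<Rightarrow> nat set \<Rightarrow> 'x obs_map \<Rightarrow> (real \<Rightarrow> nat \<Rightarrow> real) \<Rightarrow> bool" where
  "partial_UIO_gain f h b nu Ju Js F \<beta> \<longleftrightarrow> class_KL \<beta> \<and>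
     (\<forall>x u au ay x0. system_traj f b nu x u au \<longrightarrow> Wset nu au \<subseteq> Ju \<longrightarrow>
        (\<forall>k. \<forall>i\<in>Js. ay k i = 0) \<longrightarrow>
        (\<forall>k. norm (run_obs F x0 u (sys_output h x ay) Js k - x k) \<le> \<beta> (norm (x0 - x 0)) k))"

lemma partial_UIO_iff_gain:
  "partial_UIO f h b nu Ju Js F \<longleftrightarrow> (\<exists>\<beta>. partial_UIO_gain f h b nu Ju Js F \<beta>)"
  unfolding partial_UIO_def partial_UIO_gain_def ..

lemma obtain_partial_UIO_gains:
  assumes "\<forall>(Ju, Js) \<in> P. partial_UIO f h b nu Ju Js (obs Ju Js)"
  obtains \<beta> where
    "\<And>p. p \<in> P \<Longrightarrow> partial_UIO_gain f h b nu (fst p) (snd p) (obs (fst p) (snd p)) (\<beta> p)"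
proof -
  have "\<forall>p\<in>P. \<exists>\<beta>. partial_UIO_gain f h b nu (fst p) (snd p) (obs (fst p) (snd p)) \<beta>"
    using assms by (auto simp: partial_UIO_iff_gain)
  then show thesis
    using bchoice that by metis
qed

lemma Wset_subset: "Wset m a \<subseteq> {..<m}"
  unfolding Wset_def by auto

lemma partial_UIO_gain_estimate:
  assumes "partial_UIO_gain f h b nu Ju Js F \<beta>" "system_traj f b nu x u au"
    and "Wset nu au \<subseteq> Ju" "Js \<subseteq> {..<ny} - Wset ny ay" "norm (x0 - x 0) \<le> e"
  shows "norm (run_obs F x0 u (sys_output h x ay) Js k - x k) \<le> \<beta> e k"
proof -
  have "\<forall>k. \<forall>i\<in>Js. ay k i = 0"
    using assms(4) unfolding Wset_def by auto
  then have "norm (run_obs F x0 u (sys_output h x ay) Js k - x k) \<le> \<beta> (norm (x0 - x 0)) k"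
    using assms(1-3) unfolding partial_UIO_gain_def by blast
  also have "\<dots> \<le> \<beta> e k"
    using assms(1,5) unfolding partial_UIO_gain_def by (intro class_KL_mono[where \<beta> = \<beta>]) simp_all
  finally show ?thesis .
qed

lemma finite_Jpairs: "finite (Jpairs nu ny q1 q2)"
  by (rule finite_subset[of _ "Pow {..<nu} \<times> Pow {..<ny}"]) (auto simp: Jpairs_def)

lemma finite_Spairs: "finite (Spairs nu ny q1 q2)"
  by (rule finite_subset[of _ "Pow {..<nu} \<times> Pow {..<ny}"]) (auto simp: Spairs_def)

lemma obtain_Jpair_covering_attacks:
  assumes "Wu \<subseteq> {..<nu}" "card Wu \<le> q1" "q1 \<le> nu" "Wy \<subseteq> {..<ny}" "card Wy \<le> q2"
  obtains Ju Js where "(Ju, Js) \<in> Jpairs nu ny q1 q2" "Wu \<subseteq> Ju" "Js \<subseteq> {..<ny} - Wy"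
proof -
  obtain Ju where Ju: "Wu \<subseteq> Ju" "Ju \<subseteq> {..<nu}" "card Ju = q1"
    using exists_subset_between[of Wu q1 "{..<nu}"] assms(1-3) by auto
  have "card ({..<ny} - Wy) = ny - card Wy"
    using assms(4) by (simp add: card_Diff_subset finite_subset)
  then have "ny - q2 \<le> card ({..<ny} - Wy)"
    using assms(5) by linarith
  then obtain Js where Js: "Js \<subseteq> {..<ny} - Wy" "card Js = ny - q2"
    by (rule obtain_subset_with_card_n)
  have "(Ju, Js) \<in> Jpairs nu ny q1 q2"
    using Ju Js unfolding Jpairs_def by auto
  with Ju Js show thesis
    using that by blast
qed

lemma Jpairs_nonempty:
  assumes "q1 \<le> nu"
  shows "Jpairs nu ny q1 q2 \<noteq> {}"
proof -
  obtain Ju Js where "(Ju, Js) \<in> Jpairs nu ny q1 q2"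
    by (rule obtain_Jpair_covering_attacks[where Wu = "{}" and Wy = "{}"]) (use assms in auto)
  then show ?thesis by blast
qed

lemma obtain_Spair_below_two_Jpairs:
  assumes J: "(Ju, Js) \<in> Jpairs nu ny q1 q2" and J': "(Ju', Js') \<in> Jpairs nu ny q1 q2"
    and "2 * q1 \<le> nu" "2 * q2 \<le> ny"
  obtains Su Ss where "(Su, Ss) \<in> Spairs nu ny q1 q2" "Ju \<union> Ju' \<subseteq> Su" "Ss \<subseteq> Js \<inter> Js'"
proof -
  have Ju: "Ju \<union> Ju' \<subseteq> {..<nu}" "card (Ju \<union> Ju') \<le> 2 * q1"
    using J J' card_Un_le[of Ju Ju'] unfolding Jpairs_def by auto
  obtain Su where Su: "Ju \<union> Ju' \<subseteq> Su" "Su \<subseteq> {..<nu}" "card Su = 2 * q1"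
    using exists_subset_between[of "Ju \<union> Ju'" "2 * q1" "{..<nu}"] Ju assms(3) by auto
  have Js: "Js \<subseteq> {..<ny}" "Js' \<subseteq> {..<ny}" "card Js = ny - q2" "card Js' = ny - q2"
    using J J' unfolding Jpairs_def by auto
  then have "card Js + card Js' = card (Js \<union> Js') + card (Js \<inter> Js')"
    by (intro card_Un_Int) (auto intro: finite_subset)
  moreover have "card (Js \<union> Js') \<le> ny"
    using Js card_mono[of "{..<ny}" "Js \<union> Js'"] by auto
  ultimately have "ny - 2 * q2 \<le> card (Js \<inter> Js')"
    using Js assms(4) by linarith
  then obtain Ss where Ss: "Ss \<subseteq> Js \<inter> Js'" "card Ss = ny - 2 * q2"
    by (rule obtain_subset_with_card_n)
  have "(Su, Ss) \<in> Spairs nu ny q1 q2"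
    using Su Ss Js unfolding Spairs_def by auto
  with Su Ss show thesis
    using that by blast
qed

lemma Spairs_nonempty:
  assumes "2 * q1 \<le> nu" "2 * q2 \<le> ny"
  shows "Spairs nu ny q1 q2 \<noteq> {}"
proof -
  obtain Ju Js where J: "(Ju, Js) \<in> Jpairs nu ny q1 q2"
    using Jpairs_nonempty[of q1 nu ny q2] assms(1) by auto
  obtain Su Ss where "(Su, Ss) \<in> Spairs nu ny q1 q2"
    by (rule obtain_Spair_below_two_Jpairs[OF J J assms])
  then show ?thesis by blast
qed

lemma pi_J_ge:
  assumes "(Su, Ss) \<in> Spairs nu ny q1 q2" "Ju \<subseteq> Su" "Ss \<subseteq> Js"
  shows "norm (xJ Ju Js k - xS Su Ss k) \<le> pi_J xJ xS nu ny q1 q2 Ju Js k"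
  unfolding pi_J_def
proof (rule Max_ge)
  show "finite {norm (xJ Ju Js k - xS Su Ss k) | Su Ss.
      (Su, Ss) \<in> Spairs nu ny q1 q2 \<and> Ju \<subseteq> Su \<and> Ss \<subseteq> Js}"
    by (rule finite_subset[OF _ finite_imageI[OF finite_Spairs]]) auto
qed (use assms in blast)

lemma pi_J_le:
  assumes "(Su, Ss) \<in> Spairs nu ny q1 q2" "Ju \<subseteq> Su" "Ss \<subseteq> Js"
    and "\<And>Su Ss. (Su, Ss) \<in> Spairs nu ny q1 q2 \<Longrightarrow> Ju \<subseteq> Su \<Longrightarrow> Ss \<subseteq> Js \<Longrightarrow>
           norm (xJ Ju Js k - xS Su Ss k) \<le> c"
  shows "pi_J xJ xS nu ny q1 q2 Ju Js k \<le> c"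
  unfolding pi_J_def
proof (rule Max.boundedI)
  show "finite {norm (xJ Ju Js k - xS Su Ss k) | Su Ss.
      (Su, Ss) \<in> Spairs nu ny q1 q2 \<and> Ju \<subseteq> Su \<and> Ss \<subseteq> Js}"
    by (rule finite_subset[OF _ finite_imageI[OF finite_Spairs]]) auto
qed (use assms in auto)

lemma pi_J_minimizer_error_le:
  fixes z :: "'x::real_normed_vector"
  assumes q: "2 * q1 \<le> nu" "2 * q2 \<le> ny"
    and W: "Wu \<subseteq> {..<nu}" "card Wu \<le> q1" "Wy \<subseteq> {..<ny}" "card Wy \<le> q2"
    and accurateJ: "\<And>Ju Js. (Ju, Js) \<in> Jpairs nu ny q1 q2 \<Longrightarrow> Wu \<subseteq> Ju \<Longrightarrow> Js \<subseteq> {..<ny} - Wy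
                      \<Longrightarrow> norm (xJ Ju Js k - z) \<le> M"
    and accurateS: "\<And>Su Ss. (Su, Ss) \<in> Spairs nu ny q1 q2 \<Longrightarrow> Wu \<subseteq> Su \<Longrightarrow> Ss \<subseteq> {..<ny} - Wy
                      \<Longrightarrow> norm (xS Su Ss k - z) \<le> M"
    and sel: "(Ju, Js) \<in> Jpairs nu ny q1 q2"
    and minimal: "\<And>Ju' Js'. (Ju', Js') \<in> Jpairs nu ny q1 q2 \<Longrightarrow>
                    pi_J xJ xS nu ny q1 q2 Ju Js k \<le> pi_J xJ xS nu ny q1 q2 Ju' Js' k"
  shows "norm (xJ Ju Js k - z) \<le> 3 * M"
proof -
  obtain Ja Jb where a: "(Ja, Jb) \<in> Jpairs nu ny q1 q2" "Wu \<subseteq> Ja" "Jb \<subseteq> {..<ny} - Wy"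
    by (rule obtain_Jpair_covering_attacks[OF W(1,2) _ W(3,4)]) (use q in auto)
  have accurate_below_a: "norm (xS Su Ss k - z) \<le> M"
    if "(Su, Ss) \<in> Spairs nu ny q1 q2" "Ja \<subseteq> Su" "Ss \<subseteq> Jb" for Su Ss
  proof (rule accurateS[OF that(1)])
    show "Wu \<subseteq> Su"
      using a(2) that(2) by (rule order_trans)
    show "Ss \<subseteq> {..<ny} - Wy"
      using that(3) a(3) by (rule order_trans)
  qed
  have pi_a: "pi_J xJ xS nu ny q1 q2 Ja Jb k \<le> 2 * M"
  proof -
    obtain Su Ss where "(Su, Ss) \<in> Spairs nu ny q1 q2" "Ja \<subseteq> Su" "Ss \<subseteq> Jb"
      by (rule obtain_Spair_below_two_Jpairs[OF a(1) a(1) q]) auto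
    then show ?thesis
    proof (rule pi_J_le)
      fix Su Ss
      assume S: "(Su, Ss) \<in> Spairs nu ny q1 q2" "Ja \<subseteq> Su" "Ss \<subseteq> Jb"
      have "norm (xJ Ja Jb k - xS Su Ss k) \<le> norm (xJ Ja Jb k - z) + norm (xS Su Ss k - z)"
        by (rule norm_diff_triangle_le[where y = z]) (simp_all add: norm_minus_commute)
      also have "\<dots> \<le> M + M"
        using accurateJ[OF a] accurate_below_a[OF S] by (rule add_mono)
      finally show "norm (xJ Ja Jb k - xS Su Ss k) \<le> 2 * M"
        by simp
    qed
  qed
  obtain Su Ss where S: "(Su, Ss) \<in> Spairs nu ny q1 q2" "Ju \<union> Ja \<subseteq> Su" "Ss \<subseteq> Js \<inter> Jb"
    by (rule obtain_Spair_below_two_Jpairs[OF sel a(1) q])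
  have "norm (xJ Ju Js k - z) \<le> norm (xJ Ju Js k - xS Su Ss k) + norm (xS Su Ss k - z)"
    by (rule norm_diff_triangle_le[where y = "xS Su Ss k"]) simp_all
  also have "\<dots> \<le> pi_J xJ xS nu ny q1 q2 Ju Js k + M"
    using S by (intro add_mono pi_J_ge accurate_below_a) auto
  also have "\<dots> \<le> pi_J xJ xS nu ny q1 q2 Ja Jb k + M"
    using minimal[OF a(1)] by simp
  also have "\<dots> \<le> 3 * M"
    using pi_a by simp
  finally show ?thesis .
qed

lemma selected_estimate_error_le:
  fixes x :: "nat \<Rightarrow> 'x::euclidean_space"
  assumes q: "2 * q1 \<le> nu" "2 * q2 \<le> ny"
    and gainJ: "\<And>p. p \<in> Jpairs nu ny q1 q2 \<Longrightarrow>
                  partial_UIO_gain f h b nu (fst p) (snd p) (obsJ (fst p) (snd p)) (\<beta>J p)"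
    and gainS: "\<And>p. p \<in> Spairs nu ny q1 q2 \<Longrightarrow>
                  partial_UIO_gain f h b nu (fst p) (snd p) (obsS (fst p) (snd p)) (\<beta>S p)"
    and traj: "system_traj f b nu x u au"
    and W: "card (Wset nu au) \<le> q1" "card (Wset ny ay) \<le> q2"
    and xJ: "xJ = (\<lambda>Ju Js. run_obs (obsJ Ju Js) (xJ0 Ju Js) u (sys_output h x ay) Js)"
    and xS: "xS = (\<lambda>Su Ss. run_obs (obsS Su Ss) (xS0 Su Ss) u (sys_output h x ay) Ss)"
    and e0J: "\<And>Ju Js. (Ju, Js) \<in> Jpairs nu ny q1 q2 \<Longrightarrow> norm (xJ0 Ju Js - x 0) \<le> e0"
    and e0S: "\<And>Su Ss. (Su, Ss) \<in> Spairs nu ny q1 q2 \<Longrightarrow> norm (xS0 Su Ss - x 0) \<le> e0"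
    and sel: "(Ju, Js) \<in> Jpairs nu ny q1 q2"
    and minimal: "\<And>Ju' Js'. (Ju', Js') \<in> Jpairs nu ny q1 q2 \<Longrightarrow>
                    pi_J xJ xS nu ny q1 q2 Ju Js k \<le> pi_J xJ xS nu ny q1 q2 Ju' Js' k"
  shows "norm (xJ Ju Js k - x k)
           \<le> 3 * ((\<Sum>p\<in>Jpairs nu ny q1 q2. \<beta>J p e0 k) + (\<Sum>p\<in>Spairs nu ny q1 q2. \<beta>S p e0 k))"
proof -
  let ?JP = "Jpairs nu ny q1 q2" and ?SP = "Spairs nu ny q1 q2"
  define MJ where "MJ = (\<Sum>p\<in>?JP. \<beta>J p e0 k)"
  define MS where "MS = (\<Sum>p\<in>?SP. \<beta>S p e0 k)"
  have e0: "0 \<le> e0"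
    using norm_ge_zero e0J[OF sel] by (rule order_trans)
  have nonnegJ: "0 \<le> \<beta>J p e0 k" if "p \<in> ?JP" for p
    using gainJ[OF that] e0 by (simp add: partial_UIO_gain_def class_KL_nonneg)
  have nonnegS: "0 \<le> \<beta>S p e0 k" if "p \<in> ?SP" for p
    using gainS[OF that] e0 by (simp add: partial_UIO_gain_def class_KL_nonneg)
  have accurateJ: "norm (xJ Ju' Js' k - x k) \<le> MJ + MS"
    if "(Ju', Js') \<in> ?JP" "Wset nu au \<subseteq> Ju'" "Js' \<subseteq> {..<ny} - Wset ny ay" for Ju' Js'
  proof -
    have "norm (xJ Ju' Js' k - x k) \<le> \<beta>J (Ju', Js') e0 k"
      unfolding xJ using partial_UIO_gain_estimate[OF gainJ[OF that(1)] traj] that e0J by simp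
    also have "\<dots> \<le> MJ"
      unfolding MJ_def using that(1) nonnegJ finite_Jpairs by (rule member_le_sum) auto
    also have "\<dots> \<le> MJ + MS"
      unfolding MS_def using nonnegS by (simp add: sum_nonneg)
    finally show ?thesis .
  qed
  have accurateS: "norm (xS Su Ss k - x k) \<le> MJ + MS"
    if "(Su, Ss) \<in> ?SP" "Wset nu au \<subseteq> Su" "Ss \<subseteq> {..<ny} - Wset ny ay" for Su Ss
  proof -
    have "norm (xS Su Ss k - x k) \<le> \<beta>S (Su, Ss) e0 k"
      unfolding xS using partial_UIO_gain_estimate[OF gainS[OF that(1)] traj] that e0S by simp
    also have "\<dots> \<le> MS"
      unfolding MS_def using that(1) nonnegS finite_Spairs by (rule member_le_sum) auto
    also have "\<dots> \<le> MJ + MS"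
      unfolding MJ_def using nonnegJ by (simp add: sum_nonneg)
    finally show ?thesis .
  qed
  show ?thesis
    unfolding MJ_def[symmetric] MS_def[symmetric]
    by (rule pi_J_minimizer_error_le[OF q Wset_subset W(1) Wset_subset W(2) accurateJ accurateS sel minimal])
qed

theorem theorem2:
  fixes f :: "'x::euclidean_space \<Rightarrow> 'x" and h :: "'x \<Rightarrow> nat \<Rightarrow> real"
    and b :: "nat \<Rightarrow> 'x" and nu ny q1 q2 :: nat
    and obsJ obsS :: "nat set \<Rightarrow> nat set \<Rightarrow> 'x obs_map"
  assumes rankB: "full_col_rank b nu"
    and q_exist: "\<forall>Ju Js. Ju \<subseteq> {..<nu} \<and> card Ju \<le> 2 * q1 \<and> Js \<subseteq> {..<ny} \<and> card Js \<ge> ny - 2 * q2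
                    \<longrightarrow> (\<exists>F. partial_UIO f h b nu Ju Js F)"
    and q1_lt: "2 * q1 < nu" and q2_lt: "2 * q2 < ny"
    and obsJ_UIO: "\<forall>(Ju, Js) \<in> Jpairs nu ny q1 q2. partial_UIO f h b nu Ju Js (obsJ Ju Js)"
    and obsS_UIO: "\<forall>(Su, Ss) \<in> Spairs nu ny q1 q2. partial_UIO f h b nu Su Ss (obsS Su Ss)"
  shows "\<exists>\<beta>b. class_KL \<beta>b \<and>
    (\<forall>x u au ay xJ0 xS0 \<sigma>.
      system_traj f b nu x u au \<longrightarrow>
      card (Wset nu au) \<le> q1 \<longrightarrow> card (Wset ny ay) \<le> q2 \<longrightarrow>
      (let y = sys_output h x ay;
           xJ = (\<lambda>Ju Js. run_obs (obsJ Ju Js) (xJ0 Ju Js) u y Js);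
           xS = (\<lambda>Su Ss. run_obs (obsS Su Ss) (xS0 Su Ss) u y Ss);
           e0 = Max ((\<lambda>(Ju, Js). norm (xJ0 Ju Js - x 0)) ` Jpairs nu ny q1 q2
                     \<union> (\<lambda>(Su, Ss). norm (xS0 Su Ss - x 0)) ` Spairs nu ny q1 q2)
       in (\<forall>k. \<sigma> k \<in> Jpairs nu ny q1 q2 \<and>
               (\<forall>(Ju, Js) \<in> Jpairs nu ny q1 q2.
                  pi_J xJ xS nu ny q1 q2 (fst (\<sigma> k)) (snd (\<sigma> k)) k \<le> pi_J xJ xS nu ny q1 q2 Ju Js k))
          \<longrightarrow> (\<forall>k. norm (xJ (fst (\<sigma> k)) (snd (\<sigma> k)) k - x k) \<le> \<beta>b e0 k)))"
proof -
  let ?JP = "Jpairs nu ny q1 q2" and ?SP = "Spairs nu ny q1 q2"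
  have q: "2 * q1 \<le> nu" "2 * q2 \<le> ny"
    using q1_lt q2_lt by simp_all
  obtain \<beta>J where \<beta>J:
    "\<And>p. p \<in> ?JP \<Longrightarrow> partial_UIO_gain f h b nu (fst p) (snd p) (obsJ (fst p) (snd p)) (\<beta>J p)"
    using obsJ_UIO by (rule obtain_partial_UIO_gains) blast
  obtain \<beta>S where \<beta>S:
    "\<And>p. p \<in> ?SP \<Longrightarrow> partial_UIO_gain f h b nu (fst p) (snd p) (obsS (fst p) (snd p)) (\<beta>S p)"
    using obsS_UIO by (rule obtain_partial_UIO_gains) blast
  define \<beta> where "\<beta> = (\<lambda>r k. 3 * ((\<Sum>p\<in>?JP. \<beta>J p r k) + (\<Sum>p\<in>?SP. \<beta>S p r k)))"
  have "class_KL \<beta>"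
    unfolding \<beta>_def using Jpairs_nonempty Spairs_nonempty[OF q] q(1)
    by (intro class_KL_cmult class_KL_add class_KL_sum finite_Jpairs finite_Spairs)
      (auto dest: \<beta>J \<beta>S simp: partial_UIO_gain_def)
  show ?thesis
    unfolding Let_def
  proof (intro exI[of _ \<beta>] conjI \<open>class_KL \<beta>\<close> allI impI)
    fix x u au ay xJ0 xS0 and \<sigma> :: "nat \<Rightarrow> nat set \<times> nat set" and k
    assume traj: "system_traj f b nu x u au"
      and W: "card (Wset nu au) \<le> q1" "card (Wset ny ay) \<le> q2"
    define xJ where "xJ = (\<lambda>Ju Js. run_obs (obsJ Ju Js) (xJ0 Ju Js) u (sys_output h x ay) Js)"
    define xS where "xS = (\<lambda>Su Ss. run_obs (obsS Su Ss) (xS0 Su Ss) u (sys_output h x ay) Ss)"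
    define e0 where "e0 = Max ((\<lambda>(Ju, Js). norm (xJ0 Ju Js - x 0)) ` ?JP
                               \<union> (\<lambda>(Su, Ss). norm (xS0 Su Ss - x 0)) ` ?SP)"
    assume sel: "\<forall>k. \<sigma> k \<in> ?JP \<and> (\<forall>(Ju, Js) \<in> ?JP.
                   pi_J xJ xS nu ny q1 q2 (fst (\<sigma> k)) (snd (\<sigma> k)) k \<le> pi_J xJ xS nu ny q1 q2 Ju Js k)"
    have fin: "finite ((\<lambda>(Ju, Js). norm (xJ0 Ju Js - x 0)) ` ?JP
                       \<union> (\<lambda>(Su, Ss). norm (xS0 Su Ss - x 0)) ` ?SP)"
      by (simp add: finite_Jpairs finite_Spairs)
    have e0J: "norm (xJ0 Ju Js - x 0) \<le> e0" if "(Ju, Js) \<in> ?JP" for Ju Js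
      unfolding e0_def using fin that by (intro Max_ge) force+
    have e0S: "norm (xS0 Su Ss - x 0) \<le> e0" if "(Su, Ss) \<in> ?SP" for Su Ss
      unfolding e0_def using fin that by (intro Max_ge) force+
    show "norm (xJ (fst (\<sigma> k)) (snd (\<sigma> k)) k - x k) \<le> \<beta> e0 k"
      unfolding \<beta>_def
      by (rule selected_estimate_error_le[OF q \<beta>J \<beta>S traj W xJ_def xS_def e0J e0S])
        (use sel in auto)
  qed
qed

end
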